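(* Let $G$ be a small category and $X$ a set with a partial category action by $G$. Let $\overline{X} = \{(g,x)\in{\rm mor}(G)\times X\mid d(g)\cdot x\text{ is defined}\}$ and let $\sim$ be the relation on $\overline{X}$ defined below. If $(g,x),(g',x')\in\overline{X}$ satisfy $(g,x)\sim(g',x')$, then for every $p\in{\rm mor}(G)$ with $(p,g),(p,g')\in G^2$ we have $(pg,x)\sim(pg',x')$.
   Context: Conventions: $G$ is a small category; objects are identified with their identity morphisms, so ${\rm ob}(G)\subseteq{\rm mor}(G)$; $d(g), c(g)$ are domain and codomain, $G^2=\{(g,h)\mid d(g)=c(h)\}$. A partial category action by $G$ on $X$ is a partial function ${\rm mor}(G)\times X\to X$, $(g,x)\mapsto g\cdot x$ where defined, such that: (C1) for every $x$ there is $e\in{\rm ob}(G)$ with $e\cdot x$ defined, and whenever $f\in{\rm ob}(G)$ and $f\cdot x$ is defined, $f\cdot x=x$; (C2) if $g\cdot x$ is defined then $d(g)\cdot x$ is defined; (C3) if $(g,h)\in G^2$ and $h\cdot x$ is defined, then $(gh)\cdot x$ is defined iff $g\cdot(h\cdot x)$ is defined, and then they are equal. The relation $\sim$ on $\overline{X}$: $(g,x)\sim(g',x')$ if either (i) there is $h\in{\rm mor}(G)$ with $(g',h)\in G^2$, $h\cdot x$ defined, $g = g'h$ and $x' = h\cdot x$; or (ii) $x = x'$, $g,g'\in{\rm ob}(G)$, and both $g\cdot x$ and $g'\cdot x'$ are defined. *)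

theory Defs
  imports Main
begin

(* A small category: morphism set, object set (objects identified with identity
   morphisms), domain, codomain, composition (meaningful on composable pairs). *)
record ('m) cat =
  Mor :: "'m set"
  Ob  :: "'m set"
  dom :: "'m \<Rightarrow> 'm"
  cod :: "'m \<Rightarrow> 'm"
  comp :: "'m \<Rightarrow> 'm \<Rightarrow> 'm"

definition composable :: "'m cat \<Rightarrow> 'm \<Rightarrow> 'm \<Rightarrow> bool" where
  "composable G g h \<longleftrightarrow> g \<in> Mor G \<and> h \<in> Mor G \<and> dom G g = cod G h"

definition category :: "'m cat \<Rightarrow> bool" where
  "category G \<longleftrightarrow>
     Ob G \<subseteq> Mor G \<and>
     (\<forall>g\<in>Mor G. dom G g \<in> Ob G \<and> cod G g \<in> Ob G) \<and>
     (\<forall>e\<in>Ob G. dom G e = e \<and> cod G e = e) \<and>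
     (\<forall>g h. composable G g h \<longrightarrow>
        comp G g h \<in> Mor G \<and> dom G (comp G g h) = dom G h \<and> cod G (comp G g h) = cod G g) \<and>
     (\<forall>g\<in>Mor G. comp G g (dom G g) = g \<and> comp G (cod G g) g = g) \<and>
     (\<forall>f g h. composable G f g \<longrightarrow> composable G g h \<longrightarrow>
        comp G (comp G f g) h = comp G f (comp G g h))"

definition partial_cat_action :: "'m cat \<Rightarrow> 'x set \<Rightarrow> ('m \<Rightarrow> 'x \<Rightarrow> 'x option) \<Rightarrow> bool" where
  "partial_cat_action G X act \<longleftrightarrow>
     (\<forall>g x. act g x \<noteq> None \<longrightarrow> g \<in> Mor G \<and> x \<in> X \<and> the (act g x) \<in> X) \<and>
     (\<forall>x\<in>X. (\<exists>e\<in>Ob G. act e x \<noteq> None) \<and>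
              (\<forall>f\<in>Ob G. act f x \<noteq> None \<longrightarrow> act f x = Some x)) \<and>
     (\<forall>g x. act g x \<noteq> None \<longrightarrow> act (dom G g) x \<noteq> None) \<and>
     (\<forall>g h x. composable G g h \<longrightarrow> act h x \<noteq> None \<longrightarrow>
        (act (comp G g h) x \<noteq> None \<longleftrightarrow> act g (the (act h x)) \<noteq> None) \<and>
        (act (comp G g h) x \<noteq> None \<longrightarrow> act (comp G g h) x = act g (the (act h x))))"

definition Xbar :: "'m cat \<Rightarrow> 'x set \<Rightarrow> ('m \<Rightarrow> 'x \<Rightarrow> 'x option) \<Rightarrow> ('m \<times> 'x) set" where
  "Xbar G X act = {(g, x). g \<in> Mor G \<and> x \<in> X \<and> act (dom G g) x \<noteq> None}"

definition sim_rel :: "'m cat \<Rightarrow> ('m \<Rightarrow> 'x \<Rightarrow> 'x option) \<Rightarrow> 'm \<times> 'x \<Rightarrow> 'm \<times> 'x \<Rightarrow> bool" where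
  "sim_rel G act a b \<longleftrightarrow> (case a of (g, x) \<Rightarrow> case b of (g', x') \<Rightarrow>
     (\<exists>h\<in>Mor G. composable G g' h \<and> act h x \<noteq> None \<and> g = comp G g' h \<and> act h x = Some x') \<or>
     (x = x' \<and> g \<in> Ob G \<and> g' \<in> Ob G \<and> act g x \<noteq> None \<and> act g' x' \<noteq> None))"

end

(* In case (i) the connecting morphism h for (g,x) ~ (g',x') also connects (pg,x) to (pg',x'),
   because pg = (pg')h by associativity. In case (ii) g and g' are objects composable with p,
   so both equal d(p) and pg = pg' = p; the pair (p,x) is then related to itself through the
   identity g, which fixes x by (C1). *)
theory Submission
  imports Defs
begin

lemma category_comp_assoc:
  assumes "category G" "composable G f g" "composable G g h"
  shows "comp G (comp G f g) h = comp G f (comp G g h)"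
  using assms unfolding category_def by blast

lemma composable_comp_left:
  assumes "category G" "composable G f g" "composable G g h"
  shows "composable G (comp G f g) h"
  using assms unfolding category_def composable_def by auto

lemma composable_object_eq_dom:
  assumes "category G" "composable G p e" "e \<in> Ob G"
  shows "e = dom G p"
  using assms unfolding category_def composable_def by auto

lemma comp_dom_right:
  assumes "category G" "p \<in> Mor G"
  shows "comp G p (dom G p) = p"
  using assms unfolding category_def by blast

lemma partial_cat_action_object_fixes:
  assumes "partial_cat_action G X act" "e \<in> Ob G" "act e x \<noteq> None"
  shows "act e x = Some x"
  using assms unfolding partial_cat_action_def by blast

lemma sim_rel_via_morphism:
  assumes "h \<in> Mor G" "composable G g' h" "act h x = Some x'"
  shows "sim_rel G act (comp G g' h, x) (g', x')"
  using assms unfolding sim_rel_def by auto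

lemma sim_rel_refl_through_dom:
  assumes "category G" "partial_cat_action G X act" "p \<in> Mor G" "act (dom G p) x \<noteq> None"
  shows "sim_rel G act (p, x) (p, x)"
proof -
  have dom_obj: "dom G p \<in> Ob G"
    using assms(1,3) unfolding category_def by blast
  then have "dom G p \<in> Mor G"
    using assms(1) unfolding category_def by blast
  moreover have "composable G p (dom G p)"
    using assms(1,3) dom_obj unfolding category_def composable_def by auto
  moreover have "act (dom G p) x = Some x"
    using partial_cat_action_object_fixes[OF assms(2) dom_obj assms(4)] .
  ultimately have "sim_rel G act (comp G p (dom G p), x) (p, x)"
    by (rule sim_rel_via_morphism)
  then show ?thesis
    using comp_dom_right[OF assms(1,3)] by simp
qed

theorem proposition3p6:
  fixes G :: "'m cat" and X :: "'x set" and act :: "'m \<Rightarrow> 'x \<Rightarrow> 'x option"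
  assumes "category G"
    and "partial_cat_action G X act"
    and "(g, x) \<in> Xbar G X act" and "(g', x') \<in> Xbar G X act"
    and "sim_rel G act (g, x) (g', x')"
    and "composable G p g" and "composable G p g'"
  shows "sim_rel G act (comp G p g, x) (comp G p g', x')"
proof -
  from assms(5) consider
      (morphism) h where "h \<in> Mor G" "composable G g' h" "g = comp G g' h" "act h x = Some x'"
    | (object) "x = x'" "g \<in> Ob G" "g' \<in> Ob G" "act g x \<noteq> None"
    unfolding sim_rel_def by auto
  then show ?thesis
  proof cases
    case morphism
    have "comp G p g = comp G (comp G p g') h"
      using category_comp_assoc[OF assms(1,7) morphism(2)] morphism(3) by simp
    moreover have "sim_rel G act (comp G (comp G p g') h, x) (comp G p g', x')"
      using sim_rel_via_morphism[of h G "comp G p g'" act x x', OF morphism(1)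
          composable_comp_left[OF assms(1,7) morphism(2)] morphism(4)] .
    ultimately show ?thesis by simp
  next
    case object
    have g_dom: "g = dom G p"
      by (rule composable_object_eq_dom[OF assms(1,6) object(2)])
    have g'_dom: "g' = dom G p"
      by (rule composable_object_eq_dom[OF assms(1,7) object(3)])
    have "p \<in> Mor G"
      using assms(6) unfolding composable_def by blast
    then have "sim_rel G act (p, x) (p, x)"
      using sim_rel_refl_through_dom[OF assms(1,2)] object(4) g_dom by simp
    then show ?thesis
      using comp_dom_right[OF assms(1) \<open>p \<in> Mor G\<close>] g_dom g'_dom object(1) by simp
  qed
qed

end
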